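(* Let $p$ be an odd prime and $a\in\mathbb Z_p$ with $a\not\equiv 0,-1\pmod p$. Then, as polynomials in an indeterminate $t$ with coefficients in $\mathbb Z_p$ (congruence coefficientwise), $$\sum_{k=0}^{p-2}\binom ak\binom{-1-a}k\binom{2k}k\frac{(-t(t+1))^k}{k+1}\equiv\Big(\sum_{k=0}^{p-1}\binom ak\binom{-1-a}k(-t)^k\Big)^2-\frac{t+1}{a(a+1)t}\Big(\sum_{k=0}^{p-1}\binom ak\binom{-1-a}k k(-t)^k\Big)^2\pmod{p^2},$$ where the last term is a polynomial in $t$ since the squared sum is divisible by $t^2$.
   Context: $\mathbb Z_p$ denotes the set of rational numbers whose denominator is not divisible by $p$; for $u,v\in\mathbb Z_p$, $u\equiv v\pmod{p^r}$ means $(u-v)/p^r\in\mathbb Z_p$. For $a$ rational, the generalized binomial coefficient is $\binom a0=1$ and $\binom ak=\frac{a(a-1)\cdots(a-k+1)}{k!}$ for $k\ge1$. *)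

theory Defs
  imports "HOL-Computational_Algebra.Polynomial" "HOL-Computational_Algebra.Primes"
begin

text \<open>Z_p: rationals whose (reduced) denominator is not divisible by p.\<close>
definition p_integral :: "nat \<Rightarrow> rat \<Rightarrow> bool" where
  "p_integral p q \<longleftrightarrow> \<not> (int p dvd snd (quotient_of q))"

definition cong_pp :: "nat \<Rightarrow> nat \<Rightarrow> rat \<Rightarrow> rat \<Rightarrow> bool" where
  "cong_pp p r u v \<longleftrightarrow> p_integral p ((u - v) / of_nat (p ^ r))"

definition poly_cong_pp :: "nat \<Rightarrow> nat \<Rightarrow> rat poly \<Rightarrow> rat poly \<Rightarrow> bool" where
  "poly_cong_pp p r P Q \<longleftrightarrow> (\<forall>n. cong_pp p r (coeff P n) (coeff Q n))"

end

theory Submission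
  imports Defs
begin

text \<open>
  Put \<open>x = a (a + 1)\<close>. Then \<open>binom(a, k) binom(-1 - a, k) = \<Prod>j<k. (j (j + 1) - x) / (j + 1)\<^sup>2\<close>,
  so \<open>x\<close> times the difference of the two sides is a polynomial \<open>D\<^sub>x(t)\<close> whose coefficients are
  polynomials in \<open>x\<close> with \<open>p\<close>-integral coefficients: only the denominators \<open>(j + 1)\<^sup>2\<close> and
  \<open>k + 1\<close> with \<open>j, k < p - 1\<close> occur.

  For \<open>x = n (n + 1)\<close> with \<open>n \<le> p - 2\<close> all sums terminate and \<open>D\<^sub>x = 0\<close> exactly:
  \<open>S = \<Sum> binom(a, k) binom(-1 - a, k) (-t)\<^sup>k\<close> solves Legendre's equation
  \<open>t (t + 1) S'' + (1 + 2 t) S' = x S\<close>, Clausen's formula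
  \<open>S\<^sup>2 = \<Sum> binom(a, k) binom(-1 - a, k) binom(2k, k) (-t (t + 1))\<^sup>k\<close> holds because both sides
  are killed by the symmetric square of Legendre's operator and agree at \<open>t = 0\<close>, and integrating
  \<open>(t (t + 1) (x S\<^sup>2 - t (t + 1) S'\<^sup>2))' = x (1 + 2 t) S\<^sup>2\<close> gives \<open>D\<^sub>x = 0\<close>.

  Now let \<open>a \<equiv> n (mod p)\<close>; the hypotheses force \<open>1 \<le> n \<le> p - 2\<close>. Every coefficient \<open>d\<close> of
  \<open>D\<close> vanishes at \<open>n (n + 1)\<close> and at \<open>(p - 1 - n) (p - n)\<close>, and \<open>x\<close> differs from both roots
  by a multiple of \<open>p\<close>. Writing \<open>d(X) = (X - n (n + 1)) q(X)\<close>, the polynomial \<open>q\<close> vanishes at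
  the other root, so \<open>p\<close> divides \<open>q(x)\<close> and \<open>p\<^sup>2\<close> divides \<open>d(x)\<close>.
\<close>

section \<open>Legendre's equation and Clausen's formula\<close>

lemma pcompose_numeral [simp]: "pcompose (numeral n) q = (numeral n :: 'a::comm_semiring_1 poly)"
  by (simp add: numeral_poly)

lemma pcompose_X [simp]: "pcompose [:0, 1:] q = (q :: 'a::comm_semiring_1 poly)"
  by (simp add: pcompose_pCons)

lemma pcompose_power: "pcompose (p ^ n) q = (pcompose p q) ^ n"
  by (induction n) (simp_all add: pcompose_mult pcompose_1)

abbreviation pronic :: "'a::comm_semiring_1 poly" where
  "pronic \<equiv> [:0, 1:] * ([:0, 1:] + 1)"

lemma pderiv_pronic: "pderiv (pronic :: 'a::idom poly) = 1 + 2 * [:0, 1:]"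
  by (simp add: pderiv_mult pderiv_add pderiv_pCons algebra_simps one_pCons numeral_poly)

lemma pderiv_one_plus_two_X: "pderiv (1 + 2 * [:0, 1:] :: 'a::idom poly) = 2"
  by (simp add: pderiv_add pderiv_mult pderiv_pCons)

lemma one_plus_two_X_squared: "(1 + 2 * [:0, 1:])^2 = (1 + 4 * pronic :: 'a::idom poly)"
  by (simp add: algebra_simps power2_eq_square)

definition euler_op :: "'a::idom poly \<Rightarrow> 'a poly" where
  "euler_op P = [:0, 1:] * pderiv P"

lemma coeff_euler_op [simp]: "coeff (euler_op P) k = of_nat k * coeff P k"
  unfolding euler_op_def by (cases k) (simp_all add: coeff_pderiv)

lemma euler_op_twice:
  "[:0, 1:]^2 * pderiv (pderiv P) = euler_op (euler_op P) - euler_op (P :: 'a::idom poly)"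
  unfolding euler_op_def by (simp add: pderiv_mult pderiv_pCons algebra_simps power2_eq_square)

lemma euler_op_thrice:
  "[:0, 1:]^3 * pderiv (pderiv (pderiv P))
     = euler_op (euler_op (euler_op P)) - 3 * euler_op (euler_op P) + 2 * euler_op (P :: 'a::idom poly)"
  unfolding euler_op_def
  by (simp add: pderiv_mult pderiv_add pderiv_pCons algebra_simps power3_eq_cube numeral_3_eq_3 numeral_2_eq_2)

text \<open>Legendre's equation \<open>(1 - z\<^sup>2) y'' - 2 z y' + a (a + 1) y = 0\<close> in the variable
  \<open>t = (z - 1) / 2\<close>, with \<open>x = a (a + 1)\<close>.\<close>
definition legendre_ode :: "'a::idom \<Rightarrow> 'a poly \<Rightarrow> bool" where
  "legendre_ode x S \<longleftrightarrow> pronic * pderiv (pderiv S) + (1 + 2 * [:0, 1:]) * pderiv S = [:x:] * S"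

lemma legendre_ode_if_coeff_rec:
  fixes S :: "'a::idom poly"
  assumes rec: "\<And>k. of_nat ((k + 1)^2) * coeff S (Suc k) = (x - of_nat (k * (k + 1))) * coeff S k"
  shows "legendre_ode x S"
proof -
  have "[:0, 1:] * (pronic * pderiv (pderiv S) + (1 + 2 * [:0, 1:]) * pderiv S - [:x:] * S)
      = euler_op (euler_op S) + [:0, 1:] * (euler_op (euler_op S) + euler_op S - [:x:] * S)"
  proof -
    have "[:0, 1:] * pderiv S = euler_op S" unfolding euler_op_def ..
    with euler_op_twice[of S] show ?thesis by algebra
  qed
  also have "\<dots> = 0"
  proof (rule poly_eqI)
    fix k
    show "coeff (euler_op (euler_op S) + [:0, 1:] * (euler_op (euler_op S) + euler_op S - [:x:] * S)) k = coeff 0 k"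
      using rec[of "k - 1"] by (cases k) (simp_all add: algebra_simps power2_eq_square)
  qed
  finally show ?thesis unfolding legendre_ode_def by simp
qed

text \<open>The symmetric square of Legendre's operator: it annihilates the product of any two
  solutions of \<open>legendre_ode x\<close>.\<close>
definition sym_square_op :: "'a::idom \<Rightarrow> 'a poly \<Rightarrow> 'a poly" where
  "sym_square_op x w = pronic^2 * pderiv (pderiv (pderiv w))
     + 3 * pronic * (1 + 2 * [:0, 1:]) * pderiv (pderiv w)
     + ((1 + 2 * [:0, 1:])^2 + (2 - 4 * [:x:]) * pronic) * pderiv w
     - 2 * [:x:] * (1 + 2 * [:0, 1:]) * w"

lemma sym_square_op_diff: "sym_square_op x (v - w) = sym_square_op x v - sym_square_op x w"
  unfolding sym_square_op_def pderiv_diff by algebra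

lemma monom_1_dvd_euler_op: "monom 1 n dvd P \<Longrightarrow> monom 1 n dvd euler_op P"
  by (simp add: monom_1_dvd_iff')

lemma X_mult_sym_square_op:
  fixes w :: "'a::idom poly"
  shows "[:0, 1:] * sym_square_op x w = euler_op (euler_op (euler_op w)) + [:0, 1:] *
    ((2 + [:0, 1:]) * (euler_op (euler_op (euler_op w)) - 3 * euler_op (euler_op w) + 2 * euler_op w)
      + 3 * (3 + 2 * [:0, 1:]) * (euler_op (euler_op w) - euler_op w)
      + (6 - 4 * [:x:]) * (1 + [:0, 1:]) * euler_op w - 2 * [:x:] * (1 + 2 * [:0, 1:]) * w)"
proof -
  have ring_identity: "t * ((t * (t + 1))^2 * w3 + 3 * (t * (t + 1)) * (1 + 2 * t) * w2
        + ((1 + 2 * t)^2 + (2 - 4 * c) * (t * (t + 1))) * w1 - 2 * c * (1 + 2 * t) * w)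
      = e3 + t * ((2 + t) * (e3 - 3 * e2 + 2 * e1) + 3 * (3 + 2 * t) * (e2 - e1)
        + (6 - 4 * c) * (1 + t) * e1 - 2 * c * (1 + 2 * t) * w)"
    if "t^3 * w3 = e3 - 3 * e2 + 2 * e1" "t^2 * w2 = e2 - e1" "t * w1 = e1"
    for t c w1 w2 w3 e1 e2 e3 :: "'a poly"
    using that by algebra
  show ?thesis
    unfolding sym_square_op_def
    by (rule ring_identity[OF euler_op_thrice euler_op_twice euler_op_def[symmetric]])
qed

text \<open>The Euler form of \<open>sym_square_op\<close> has leading part \<open>euler_op\<^sup>3\<close>, which acts on \<open>t\<^sup>n\<close>
  by \<open>n\<^sup>3\<close>; so the coefficients of a solution are determined by its constant term.\<close>
lemma sym_square_op_eq_0_imp_eq_0: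
  fixes w :: "'a::{idom, ring_char_0} poly"
  assumes op: "sym_square_op x w = 0" and w0: "coeff w 0 = 0"
  shows "w = 0"
proof -
  define R where "R = (2 + [:0, 1:]) * (euler_op (euler_op (euler_op w)) - 3 * euler_op (euler_op w) + 2 * euler_op w)
      + 3 * (3 + 2 * [:0, 1:]) * (euler_op (euler_op w) - euler_op w)
      + (6 - 4 * [:x:]) * (1 + [:0, 1:]) * euler_op w - 2 * [:x:] * (1 + 2 * [:0, 1:]) * w"
  have euler: "[:0, 1:] * sym_square_op x w = euler_op (euler_op (euler_op w)) + [:0, 1:] * R"
    unfolding R_def by (rule X_mult_sym_square_op)
  have "monom 1 n dvd w" for n
  proof (induction n)
    case 0
    show ?case by simp
  next
    case (Suc n)
    have "coeff w n = 0"
    proof (cases n)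
      case 0
      with w0 show ?thesis by simp
    next
      case (Suc m)
      have "monom 1 n dvd R"
        unfolding R_def using Suc.IH by (intro dvd_add dvd_diff dvd_mult monom_1_dvd_euler_op)
      then have "coeff R m = 0" by (simp add: monom_1_dvd_iff' Suc)
      have "0 = coeff ([:0, 1:] * sym_square_op x w) n" by (simp add: op)
      also have "\<dots> = of_nat n ^ 3 * coeff w n"
        using \<open>coeff R m = 0\<close> unfolding euler by (simp add: Suc power3_eq_cube)
      finally have "of_nat n ^ 3 * coeff w n = 0" ..
      moreover have "(of_nat n :: 'a) \<noteq> 0" using Suc by (simp only: of_nat_eq_0_iff)
      ultimately show ?thesis by simp
    qed
    with Suc.IH show ?case by (auto simp: monom_1_dvd_iff' less_Suc_eq)
  qed
  from this[of "Suc (degree w)"] have "coeff w (degree w) = 0"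
    by (simp add: monom_1_dvd_iff')
  then show "w = 0" by simp
qed

lemma sym_square_op_square:
  fixes S :: "'a::idom poly"
  assumes ode: "legendre_ode x S"
  shows "sym_square_op x (S^2) = 0"
proof -
  define S1 S2 S3 where "S1 = pderiv S" and "S2 = pderiv S1" and "S3 = pderiv S2"
  have ode1: "pronic * S2 + (1 + 2 * [:0, 1:]) * S1 = [:x:] * S"
    using ode unfolding legendre_ode_def S1_def S2_def .
  have product_rule: "pderiv (u * s2 + v * s1) = u * pderiv s2 + 2 * v * s2 + 2 * s1"
    if "pderiv u = v" "pderiv v = 2" "pderiv s1 = s2" for u v s1 s2 :: "'a poly"
    using that by (simp add: pderiv_add pderiv_mult algebra_simps)
  have "pderiv ([:x:] * S) = [:x:] * S1"
    unfolding S1_def by (simp add: pderiv_pCons pderiv_smult)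
  with arg_cong[OF ode1, of pderiv]
  have ode2: "pronic * S3 + 2 * (1 + 2 * [:0, 1:]) * S2 + 2 * S1 = [:x:] * S1"
    unfolding S3_def S2_def
    by (simp only: product_rule pderiv_pronic pderiv_one_plus_two_X)
  have d1: "pderiv (S^2) = 2 * S * S1"
    unfolding S1_def power2_eq_square pderiv_mult by (simp add: algebra_simps)
  have d2: "pderiv (2 * S * S1) = 2 * S1^2 + 2 * S * S2"
    unfolding S2_def S1_def by (simp add: pderiv_mult power2_eq_square algebra_simps)
  have d3: "pderiv (2 * S1^2 + 2 * S * S2) = 6 * S1 * S2 + 2 * S * S3"
    unfolding S3_def S2_def S1_def by (simp add: pderiv_mult pderiv_add power2_eq_square algebra_simps)
  have ring_identity: "u^2 * (6 * s1 * s2 + 2 * s * s3) + 3 * u * v * (2 * s1^2 + 2 * s * s2)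
      + (v^2 + (2 - 4 * c) * u) * (2 * s * s1) - 2 * c * v * s^2 = 0"
    if "u * s2 + v * s1 = c * s" "u * s3 + 2 * v * s2 + 2 * s1 = c * s1"
    for u v c s s1 s2 s3 :: "'a poly"
    using that by algebra
  show ?thesis
    unfolding sym_square_op_def d1 d2 d3 by (rule ring_identity[OF ode1 ode2])
qed

definition sym_square_op_u :: "'a::idom \<Rightarrow> 'a poly \<Rightarrow> 'a poly" where
  "sym_square_op_u x B = [:0, 1:]^2 * (1 + 4 * [:0, 1:]) * pderiv (pderiv (pderiv B))
     + (3 * [:0, 1:] + 18 * [:0, 1:]^2) * pderiv (pderiv B)
     + (1 + (12 - 4 * [:x:]) * [:0, 1:]) * pderiv B - 2 * [:x:] * B"

lemma sym_square_op_pcompose_pronic: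
  fixes B :: "'a::idom poly"
  shows "sym_square_op x (pcompose B pronic) = (1 + 2 * [:0, 1:]) * pcompose (sym_square_op_u x B) pronic"
proof -
  define u v where "u = (pronic :: 'a poly)" and "v = 1 + 2 * [:0, 1::'a:]"
  define B0 B1 B2 B3 where "B0 = pcompose B u" and "B1 = pcompose (pderiv B) u"
    and "B2 = pcompose (pderiv (pderiv B)) u" and "B3 = pcompose (pderiv (pderiv (pderiv B))) u"
  have du: "pderiv u = v" unfolding u_def v_def by (rule pderiv_pronic)
  have dv: "pderiv v = 2" unfolding v_def by (rule pderiv_one_plus_two_X)
  have d1: "pderiv B0 = B1 * v"
    unfolding B0_def B1_def by (simp add: pderiv_pcompose du)
  have d2: "pderiv (B1 * v) = B2 * v^2 + 2 * B1"
    unfolding B1_def B2_def by (simp add: pderiv_pcompose pderiv_mult du dv power2_eq_square algebra_simps)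
  have d3: "pderiv (B2 * v^2 + 2 * B1) = B3 * v^3 + 6 * B2 * v"
    unfolding B2_def B3_def
    by (simp add: pderiv_pcompose pderiv_mult pderiv_add du dv power2_eq_square power3_eq_cube
        algebra_simps B1_def)
  have ring_identity: "u^2 * (b3 * v^3 + 6 * b2 * v) + 3 * u * v * (b2 * v^2 + 2 * b1)
      + (v^2 + (2 - 4 * c) * u) * (b1 * v) - 2 * c * v * b0
    = v * (u^2 * (1 + 4 * u) * b3 + (3 * u + 18 * u^2) * b2 + (1 + (12 - 4 * c) * u) * b1 - 2 * c * b0)"
    if "v^2 = 1 + 4 * u" for c b0 b1 b2 b3 :: "'a poly"
    using that by algebra
  have "sym_square_op x B0 = v * (u^2 * (1 + 4 * u) * B3 + (3 * u + 18 * u^2) * B2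
      + (1 + (12 - 4 * [:x:]) * u) * B1 - 2 * [:x:] * B0)"
    unfolding sym_square_op_def d1 d2 d3 u_def[symmetric] v_def[symmetric]
    by (rule ring_identity) (unfold u_def v_def, rule one_plus_two_X_squared)
  also have "u^2 * (1 + 4 * u) * B3 + (3 * u + 18 * u^2) * B2 + (1 + (12 - 4 * [:x:]) * u) * B1
      - 2 * [:x:] * B0 = pcompose (sym_square_op_u x B) u"
    unfolding sym_square_op_u_def B0_def B1_def B2_def B3_def
    by (simp only: pcompose_add pcompose_diff pcompose_mult pcompose_1 pcompose_numeral pcompose_X
        pcompose_const power2_eq_square)
  finally show ?thesis unfolding B0_def u_def v_def .
qed

lemma sym_square_op_u_of_coeff_rec:
  fixes B :: "'a::idom poly"
  assumes rec: "\<And>k. of_nat ((k + 1)^3) * coeff B (Suc k)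
                  = 2 * (2 * of_nat k + 1) * (x - of_nat (k * (k + 1))) * coeff B k"
  shows "sym_square_op_u x B = 0"
proof -
  define R where "R = 4 * euler_op (euler_op (euler_op B)) + 6 * euler_op (euler_op B) + 2 * euler_op B
    - 4 * [:x:] * euler_op B - 2 * [:x:] * B"
  have ring_identity: "t * (t^2 * (1 + 4 * t) * w3 + (3 * t + 18 * t^2) * w2 + (1 + (12 - 4 * c) * t) * w1
        - 2 * c * w)
      = e3 + t * (4 * e3 + 6 * e2 + 2 * e1 - 4 * c * e1 - 2 * c * w)"
    if "t^3 * w3 = e3 - 3 * e2 + 2 * e1" "t^2 * w2 = e2 - e1" "t * w1 = e1"
    for t c w w1 w2 w3 e1 e2 e3 :: "'a poly"
    using that by algebra
  have "[:0, 1:] * sym_square_op_u x B = euler_op (euler_op (euler_op B)) + [:0, 1:] * R"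
    unfolding sym_square_op_u_def R_def
    by (rule ring_identity[OF euler_op_thrice euler_op_twice euler_op_def[symmetric]])
  also have "\<dots> = 0"
  proof (rule poly_eqI)
    fix k
    show "coeff (euler_op (euler_op (euler_op B)) + [:0, 1:] * R) k = coeff 0 k"
      using rec[of "k - 1"] unfolding R_def
      by (cases k) (simp_all add: algebra_simps power3_eq_cube power2_eq_square numeral_poly)
  qed
  finally show ?thesis by simp
qed

lemma clausen_identity:
  fixes S B :: "'a::{idom, ring_char_0} poly"
  assumes ode: "legendre_ode x S"
    and rec: "\<And>k. of_nat ((k + 1)^3) * coeff B (Suc k)
                  = 2 * (2 * of_nat k + 1) * (x - of_nat (k * (k + 1))) * coeff B k"
    and B0: "coeff B 0 = coeff S 0 ^ 2"
  shows "S^2 = pcompose B pronic"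
proof -
  have "sym_square_op x (S^2 - pcompose B pronic) = 0"
    unfolding sym_square_op_diff sym_square_op_square[OF ode] sym_square_op_pcompose_pronic
      sym_square_op_u_of_coeff_rec[OF rec] by simp
  moreover have "coeff (S^2 - pcompose B pronic) 0 = 0"
    using B0 by (simp add: power2_eq_square coeff_mult_0 poly_0_coeff_0)
  ultimately show ?thesis
    using sym_square_op_eq_0_imp_eq_0 by fastforce
qed

lemma pderiv_pronic_mult_legendre_form:
  fixes S :: "'a::idom poly"
  assumes ode: "legendre_ode x S"
  shows "pderiv (pronic * ([:x:] * S^2 - pronic * (pderiv S)^2)) = (1 + 2 * [:0, 1:]) * [:x:] * S^2"
proof -
  define u v where "u = (pronic :: 'a poly)" and "v = 1 + 2 * [:0, 1::'a:]"
  define S1 S2 where "S1 = pderiv S" and "S2 = pderiv S1"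
  have du: "pderiv u = v" unfolding u_def v_def by (rule pderiv_pronic)
  have dx: "pderiv ([:x:] * P) = [:x:] * pderiv P" for P :: "'a poly"
    by (simp add: pderiv_pCons pderiv_smult)
  have dsq: "pderiv (P^2) = 2 * P * pderiv P" for P :: "'a poly"
    by (simp add: power2_eq_square pderiv_mult algebra_simps)
  have ring_identity: "u * (c * (2 * s * s1) - (u * (2 * s1 * s2) + s1^2 * v)) + (c * s^2 - u * s1^2) * v
      = v * c * s^2"
    if "u * s2 + v * s1 = c * s" for c s s1 s2 :: "'a poly"
    using that by algebra
  have "pderiv (u * ([:x:] * S^2 - u * S1^2)) = v * [:x:] * S^2"
    unfolding pderiv_mult[of u] du pderiv_diff pderiv_mult[of u "S1^2"] dx dsq
    unfolding S1_def[symmetric] S2_def[symmetric]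
    by (rule ring_identity) (use ode in \<open>simp add: legendre_ode_def u_def v_def S1_def S2_def\<close>)
  then show ?thesis
    unfolding u_def v_def S1_def .
qed

lemma legendre_square_identity:
  fixes S L :: "'a::{idom, ring_char_0} poly"
  assumes ode: "legendre_ode x S"
    and clausen: "S^2 = pcompose (pderiv ([:0, 1:] * L)) pronic"
  shows "[:x:] * S^2 - pronic * (pderiv S)^2 = [:x:] * pcompose L pronic"
proof -
  define u where "u = (pronic :: 'a poly)"
  define Q where "Q = [:x:] * S^2 - u * (pderiv S)^2"
  have dx: "pderiv ([:x:] * P) = [:x:] * pderiv P" for P :: "'a poly"
    by (simp add: pderiv_pCons pderiv_smult)
  have "pderiv (u * Q) = (1 + 2 * [:0, 1:]) * [:x:] * S^2"
    unfolding u_def Q_def by (rule pderiv_pronic_mult_legendre_form[OF ode])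
  moreover have "pderiv (u * pcompose L u) = S^2 * (1 + 2 * [:0, 1:])"
  proof -
    have "u * pcompose L u = pcompose ([:0, 1:] * L) u"
      by (simp only: pcompose_mult pcompose_X)
    then show ?thesis
      unfolding u_def by (simp only: pderiv_pcompose pderiv_pronic clausen)
  qed
  ultimately have "pderiv (u * Q - [:x:] * (u * pcompose L u)) = 0"
    unfolding pderiv_diff dx by (simp add: algebra_simps)
  then obtain h where "u * Q - [:x:] * (u * pcompose L u) = [:h:]"
    using pderiv_iszero by blast
  moreover have "coeff (u * Q - [:x:] * (u * pcompose L u)) 0 = 0"
    unfolding u_def by (simp add: coeff_mult_0)
  ultimately have "u * (Q - [:x:] * pcompose L u) = 0"
    by (simp add: algebra_simps)
  moreover have "u \<noteq> 0"
    unfolding u_def by (simp add: one_pCons)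
  ultimately show ?thesis
    unfolding Q_def u_def by simp
qed

section \<open>The terminating identity\<close>

definition binom_pair :: "nat \<Rightarrow> 'a::field \<Rightarrow> 'a" where
  "binom_pair k x = (\<Prod>j<k. (of_nat (j * (j + 1)) - x) / of_nat ((j + 1)^2))"

lemma binom_pair_0 [simp]: "binom_pair 0 x = 1"
  by (simp add: binom_pair_def)

lemma binom_pair_Suc:
  "binom_pair (Suc k) x = binom_pair k x * ((of_nat (k * (k + 1)) - x) / of_nat ((k + 1)^2))"
  by (simp add: binom_pair_def)

lemma binom_pair_pronic_eq_0: "n < k \<Longrightarrow> binom_pair k (of_nat (n * (n + 1))) = 0"
  unfolding binom_pair_def by (rule prod_zero) auto

lemma gbinomial_Suc_eq: "(a gchoose Suc k) = (a gchoose k) * (a - of_nat k) / of_nat (Suc k)"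
  for a :: "'a::field_char_0"
proof -
  have "of_nat (Suc k) * (a gchoose Suc k) = (a gchoose k) * (a - of_nat k)"
    using gbinomial_mult_1[of a k] by (simp add: algebra_simps)
  then show ?thesis by (simp add: field_simps del: of_nat_Suc)
qed

lemma gbinomial_mult_gbinomial_neg:
  "(a gchoose k) * ((-1 - a) gchoose k) = binom_pair k (a * (a + 1))"
  for a :: "'a::field_char_0"
proof (induction k)
  case 0
  then show ?case by simp
next
  case (Suc k)
  have "(a gchoose Suc k) * ((-1 - a) gchoose Suc k)
     = (a gchoose k) * ((-1 - a) gchoose k) * ((a - of_nat k) * (-1 - a - of_nat k) / (of_nat (Suc k))^2)"
    unfolding gbinomial_Suc_eq by (simp add: power2_eq_square field_simps del: of_nat_Suc)
  also have "(a - of_nat k) * (-1 - a - of_nat k) = of_nat (k * (k + 1)) - a * (a + 1)"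
    by (simp add: algebra_simps)
  finally show ?case
    unfolding Suc binom_pair_Suc by (simp del: of_nat_Suc)
qed

lemma binom_pair_rec:
  "of_nat ((k + 1)^2) * ((-1)^Suc k * binom_pair (Suc k) x)
     = (x - of_nat (k * (k + 1))) * ((-1)^k * binom_pair k x)"
  for x :: "'a::field_char_0"
  unfolding binom_pair_Suc by (simp add: field_simps del: of_nat_Suc)

lemma central_binomial_Suc: "Suc k * ((2 * Suc k) choose Suc k) = 2 * (2 * k + 1) * ((2 * k) choose k)"
proof -
  have "Suc k * ((2 * Suc k) choose Suc k) = 2 * ((k + 1) * ((2 * k + 1) choose k))"
    using Suc_times_binomial[of k "2 * k + 1"] by (simp add: algebra_simps)
  also have "(k + 1) * ((2 * k + 1) choose k) = (2 * k + 1) * ((2 * k) choose k)"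
    using Suc_times_binomial_eq[of "2 * k" k] binomial_symmetric[of "Suc k" "Suc (2 * k)"]
    by (simp del: binomial_Suc_Suc add: algebra_simps)
  finally show ?thesis by simp
qed

lemma binom_pair_central_binomial_rec:
  fixes x :: "'a::field_char_0"
  shows "of_nat ((k + 1)^3) * ((-1)^Suc k * binom_pair (Suc k) x * of_nat ((2 * Suc k) choose Suc k))
    = 2 * (2 * of_nat k + 1) * (x - of_nat (k * (k + 1))) * ((-1)^k * binom_pair k x * of_nat ((2 * k) choose k))"
proof -
  have central: "of_nat (Suc k) * of_nat ((2 * Suc k) choose Suc k)
      = (2 * (2 * of_nat k + 1) * of_nat ((2 * k) choose k) :: 'a)"
    by (simp only: of_nat_mult[symmetric] central_binomial_Suc)
      (simp only: of_nat_mult of_nat_add of_nat_1 of_nat_numeral)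
  have "(k + 1)^3 = (k + 1)^2 * Suc k"
    by (simp add: power2_eq_square power3_eq_cube)
  then have cube: "(of_nat ((k + 1)^3) :: 'a) = of_nat ((k + 1)^2) * of_nat (Suc k)"
    by (metis of_nat_mult)
  have "of_nat ((k + 1)^3) * ((-1)^Suc k * binom_pair (Suc k) x * of_nat ((2 * Suc k) choose Suc k))
      = (of_nat ((k + 1)^2) * ((-1)^Suc k * binom_pair (Suc k) x))
        * (of_nat (Suc k) * of_nat ((2 * Suc k) choose Suc k))"
    unfolding cube by (simp only: mult_ac)
  also have "\<dots> = (x - of_nat (k * (k + 1))) * ((-1)^k * binom_pair k x)
        * (2 * (2 * of_nat k + 1) * of_nat ((2 * k) choose k))"
    by (simp only: binom_pair_rec central)
  finally show ?thesis
    by (simp only: mult_ac)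
qed

definition legendre_sum :: "nat \<Rightarrow> 'a::field \<Rightarrow> 'a poly" where
  "legendre_sum N x = (\<Sum>k=0..N. smult (binom_pair k x) ((- [:0, 1:]) ^ k))"

definition catalan_sum :: "nat \<Rightarrow> 'a::field \<Rightarrow> 'a poly" where
  "catalan_sum N x =
     (\<Sum>k=0..N. smult (binom_pair k x * of_nat ((2 * k) choose k) / of_nat (k + 1)) ((- [:0, 1:]) ^ k))"

lemma neg_X_power: "(- [:0, 1:]) ^ k = monom ((-1) ^ k :: 'a::comm_ring_1) k"
  by (induction k) (simp_all add: monom_Suc monom_0 minus_monom)

lemma coeff_legendre_sum:
  "coeff (legendre_sum N x) k = (if k \<le> N then (-1)^k * binom_pair k x else 0)"
  unfolding legendre_sum_def neg_X_power smult_monom coeff_sum coeff_monom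
  by (simp add: sum.delta' mult.commute)

lemma coeff_catalan_sum:
  "coeff (catalan_sum N x) k
     = (if k \<le> N then (-1)^k * binom_pair k x * of_nat ((2 * k) choose k) / of_nat (k + 1) else 0)"
  unfolding catalan_sum_def neg_X_power smult_monom coeff_sum coeff_monom
  by (simp add: sum.delta' mult.commute)

lemma legendre_catalan_identity:
  fixes x :: "'a::field_char_0"
  assumes x: "x = of_nat (n * (n + 1))" and "n \<le> N" "n \<le> M"
  defines "S \<equiv> legendre_sum N x" and "L \<equiv> catalan_sum M x"
  shows "[:x:] * S^2 - pronic * (pderiv S)^2 = [:x:] * pcompose L pronic"
proof -
  have vanish: "binom_pair k x = 0" if "\<not> k \<le> n" for k
    unfolding x by (rule binom_pair_pronic_eq_0) (use that in simp)
  have coeff_S: "coeff S k = (-1)^k * binom_pair k x" for k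
    unfolding S_def coeff_legendre_sum using vanish \<open>n \<le> N\<close> by auto
  have coeff_L: "coeff L k = (-1)^k * binom_pair k x * of_nat ((2 * k) choose k) / of_nat (k + 1)" for k
    unfolding L_def coeff_catalan_sum using vanish \<open>n \<le> M\<close> by auto
  define B where "B = pderiv ([:0, 1:] * L)"
  have coeff_B: "coeff B k = (-1)^k * binom_pair k x * of_nat ((2 * k) choose k)" for k
    unfolding B_def coeff_pderiv by (simp add: coeff_L del: of_nat_Suc)
  have ode: "legendre_ode x S"
    by (rule legendre_ode_if_coeff_rec) (simp only: coeff_S binom_pair_rec)
  have "of_nat ((k + 1)^3) * coeff B (Suc k) = 2 * (2 * of_nat k + 1) * (x - of_nat (k * (k + 1))) * coeff B k"
    for k
    unfolding coeff_B by (rule binom_pair_central_binomial_rec)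
  then have "S^2 = pcompose B pronic"
    by (rule clausen_identity[OF ode]) (simp add: coeff_B coeff_S)
  then show ?thesis
    unfolding B_def by (rule legendre_square_identity[OF ode])
qed

lemma pcompose_catalan_sum:
  "pcompose (catalan_sum N x) pronic
     = (\<Sum>k=0..N. smult (binom_pair k x * of_nat ((2 * k) choose k) / of_nat (k + 1)) ((- pronic) ^ k))"
  unfolding catalan_sum_def by (simp only: pcompose_sum pcompose_smult pcompose_power pcompose_uminus pcompose_X)

lemma legendre_sum_derivative:
  "(\<Sum>k=0..N. smult (binom_pair k x * of_nat k) ((- [:0, 1:]) ^ k)) = [:0, 1:] * pderiv (legendre_sum N x)"
proof (rule poly_eqI)
  fix j
  show "coeff (\<Sum>k=0..N. smult (binom_pair k x * of_nat k) ((- [:0, 1:]) ^ k)) j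
      = coeff ([:0, 1:] * pderiv (legendre_sum N x)) j"
    unfolding neg_X_power smult_monom coeff_sum coeff_monom
    by (cases j) (simp_all add: sum.delta' coeff_pderiv coeff_legendre_sum algebra_simps del: of_nat_Suc)
qed

text \<open>\<open>x\<close> times the difference of the two sides of the congruence, where \<open>x = a (a + 1)\<close>.\<close>
definition legendre_defect :: "nat \<Rightarrow> rat \<Rightarrow> rat poly" where
  "legendre_defect p x = [:x:] * pcompose (catalan_sum (p - 2) x) pronic
     - [:x:] * (legendre_sum (p - 1) x)^2 + pronic * (pderiv (legendre_sum (p - 1) x))^2"

lemma legendre_defect_at_pronic:
  assumes "n + 2 \<le> p"
  shows "legendre_defect p (of_nat (n * (n + 1))) = 0"
proof -
  define x where "x = (of_nat (n * (n + 1)) :: rat)"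
  have "[:x:] * (legendre_sum (p - 1) x)^2 - pronic * (pderiv (legendre_sum (p - 1) x))^2
      = [:x:] * pcompose (catalan_sum (p - 2) x) pronic"
    by (rule legendre_catalan_identity[OF x_def]) (use assms in linarith)+
  then show ?thesis
    unfolding legendre_defect_def x_def[symmetric] by (simp add: algebra_simps)
qed

lemma X_mult_square_div_X: "([:0, 1:] * P)^2 div [:0, 1:] = [:0, 1:] * (P :: 'a::field poly)^2"
proof -
  have "([:0, 1:] * P)^2 = [:0, 1:] * ([:0, 1:] * P^2)"
    by (simp only: power2_eq_square mult_ac)
  also have "\<dots> div [:0, 1:] = [:0, 1:] * P^2"
    by (rule nonzero_mult_div_cancel_left) simp
  finally show ?thesis .
qed

lemma smult_legendre_defect:
  assumes "x \<noteq> 0"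
  shows "smult (1 / x) (legendre_defect p x) = pcompose (catalan_sum (p - 2) x) pronic
    - ((legendre_sum (p - 1) x)^2 - smult (1 / x) (([:0, 1:] + 1) * ([:0, 1:] * (pderiv (legendre_sum (p - 1) x))^2)))"
  using assms unfolding legendre_defect_def by (simp add: algebra_simps smult_add_right smult_diff_right)

section \<open>\<open>p\<close>-integral rationals and polynomials\<close>

lemma p_integral_iff:
  assumes "prime p"
  shows "p_integral p q \<longleftrightarrow> (\<exists>m b. \<not> int p dvd b \<and> q = of_int m / of_int b)"
proof
  assume "p_integral p q"
  moreover obtain m b where qb: "quotient_of q = (m, b)"
    by (cases "quotient_of q")
  ultimately show "\<exists>m b. \<not> int p dvd b \<and> q = of_int m / of_int b"
    unfolding p_integral_def using quotient_of_div[OF qb] by auto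
next
  assume "\<exists>m b. \<not> int p dvd b \<and> q = of_int m / of_int b"
  then obtain m b where b: "\<not> int p dvd b" and q: "q = of_int m / of_int b"
    by blast
  obtain m' b' where qb: "quotient_of q = (m', b')"
    by (cases "quotient_of q")
  then have q': "q = of_int m' / of_int b'" "b' > 0" "coprime m' b'"
    using quotient_of_div quotient_of_denom_pos quotient_of_coprime by blast+
  have "b \<noteq> 0" using b by auto
  with q q' have "of_int (m * b') = (of_int (m' * b) :: rat)"
    by (simp add: field_simps)
  then have "b' dvd m' * b"
    by (metis dvd_triv_right of_int_eq_iff)
  with \<open>coprime m' b'\<close> have "b' dvd b"
    by (metis coprime_commute coprime_dvd_mult_right_iff)
  with b have "\<not> int p dvd b'"
    using dvd_trans by blast
  with qb show "p_integral p q"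
    unfolding p_integral_def by simp
qed

definition p_adic_dvd :: "nat \<Rightarrow> nat \<Rightarrow> rat \<Rightarrow> bool" where
  "p_adic_dvd p k q \<longleftrightarrow> p_integral p (q / of_nat (p ^ k))"

lemma cong_pp_iff_p_adic_dvd: "cong_pp p k u v \<longleftrightarrow> p_adic_dvd p k (u - v)"
  unfolding cong_pp_def p_adic_dvd_def ..

definition p_integral_poly :: "nat \<Rightarrow> rat poly \<Rightarrow> bool" where
  "p_integral_poly p d \<longleftrightarrow> (\<forall>i. p_integral p (coeff d i))"

definition p_integral_polyfun :: "nat \<Rightarrow> (rat \<Rightarrow> rat) \<Rightarrow> bool" where
  "p_integral_polyfun p f \<longleftrightarrow> (\<exists>d. p_integral_poly p d \<and> (\<forall>y. f y = poly d y))"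

text \<open>Bivariate polynomials, viewed as polynomials in \<open>t\<close> depending polynomially on a parameter.\<close>
definition p_integral_polyfun_coeffs :: "nat \<Rightarrow> (rat \<Rightarrow> rat poly) \<Rightarrow> bool" where
  "p_integral_polyfun_coeffs p F \<longleftrightarrow> (\<forall>m. p_integral_polyfun p (\<lambda>y. coeff (F y) m))"

lemma p_integral_poly_pCons_iff:
  "p_integral_poly p (pCons a d) \<longleftrightarrow> p_integral p a \<and> p_integral_poly p d"
  unfolding p_integral_poly_def by (metis coeff_pCons_0 coeff_pCons_Suc not0_implies_Suc)

lemma poly_diff_eq_mult_synthetic_div: "poly d w - poly d z = (w - z) * poly (synthetic_div d z) w"
  for d :: "'a::comm_ring_1 poly"
proof -
  have "poly d w = poly ([:-z, 1:] * synthetic_div d z + [:poly d z:]) w"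
    by (simp only: synthetic_div_correct')
  then show ?thesis by (simp add: algebra_simps)
qed

lemma pronic_eq_reflection_imp:
  fixes n p :: nat
  assumes "n < p" and "(p - 1 - n) * (p - n) = n * (n + 1)"
  shows "p = 2 * n + 1"
proof -
  have "strict_mono (\<lambda>k::nat. k * (k + 1))"
    by (rule strict_monoI) (intro mult_strict_mono; simp)
  moreover have "(p - 1 - n) * (p - 1 - n + 1) = n * (n + 1)"
    using assms by (simp add: Suc_diff_Suc)
  ultimately have "p - 1 - n = n"
    using strict_mono_eq by metis
  with assms(1) show ?thesis
    by simp
qed

context
  fixes p :: nat
  assumes prime: "prime p"
begin

lemma p_integral_of_int [simp]: "p_integral p (of_int m)"
  using prime_gt_1_nat[OF prime] unfolding p_integral_def by simp

lemma p_integral_of_nat [simp]: "p_integral p (of_nat m)"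
  using p_integral_of_int[of "int m"] by simp

lemma p_integral_0 [simp]: "p_integral p 0"
  and p_integral_1 [simp]: "p_integral p 1"
  using p_integral_of_nat[of 0] p_integral_of_nat[of 1] by simp_all

lemma p_integral_add: "p_integral p u \<Longrightarrow> p_integral p v \<Longrightarrow> p_integral p (u + v)"
  and p_integral_mult: "p_integral p u \<Longrightarrow> p_integral p v \<Longrightarrow> p_integral p (u * v)"
proof -
  assume "p_integral p u" "p_integral p v"
  then obtain m b m' b' where b: "\<not> int p dvd b" "\<not> int p dvd b'"
    and uv: "u = of_int m / of_int b" "v = of_int m' / of_int b'"
    unfolding p_integral_iff[OF prime] by blast
  then have "b \<noteq> 0" "b' \<noteq> 0" by auto
  have "\<not> int p dvd b * b'"
    using b prime by (simp add: prime_dvd_mult_iff)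
  moreover have "u + v = of_int (m * b' + m' * b) / of_int (b * b')" "u * v = of_int (m * m') / of_int (b * b')"
    using uv \<open>b \<noteq> 0\<close> \<open>b' \<noteq> 0\<close> by (simp_all add: add_frac_eq)
  ultimately show "p_integral p (u + v)" "p_integral p (u * v)"
    unfolding p_integral_iff[OF prime] by blast+
qed

lemma p_integral_uminus: "p_integral p u \<Longrightarrow> p_integral p (- u)"
  using p_integral_mult[OF p_integral_of_int[of "-1"]] by simp

lemma p_integral_diff: "p_integral p u \<Longrightarrow> p_integral p v \<Longrightarrow> p_integral p (u - v)"
  using p_integral_add[of u "- v"] p_integral_uminus[of v] by simp

lemma p_integral_sum: "(\<And>i. i \<in> A \<Longrightarrow> p_integral p (f i)) \<Longrightarrow> p_integral p (sum f A)"
  by (induction A rule: infinite_finite_induct) (auto intro: p_integral_add)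

lemma p_integral_divide_of_nat:
  assumes "p_integral p u" and "\<not> p dvd m"
  shows "p_integral p (u / of_nat m)"
proof -
  obtain k b where b: "\<not> int p dvd b" and u: "u = of_int k / of_int b"
    using assms(1) unfolding p_integral_iff[OF prime] by blast
  have "\<not> int p dvd b * int m"
    using b assms(2) prime by (simp add: prime_dvd_mult_iff)
  moreover have "u / of_nat m = of_int k / of_int (b * int m)"
    using u by simp
  ultimately show ?thesis
    unfolding p_integral_iff[OF prime] by blast
qed

lemma p_adic_dvd_iff: "p_adic_dvd p k q \<longleftrightarrow> (\<exists>r. p_integral p r \<and> q = of_nat p ^ k * r)"
  using prime_gt_0_nat[OF prime] unfolding p_adic_dvd_def by (auto simp: field_simps)

lemma p_adic_dvd_add: "p_adic_dvd p k u \<Longrightarrow> p_adic_dvd p k v \<Longrightarrow> p_adic_dvd p k (u + v)"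
  unfolding p_adic_dvd_def by (simp add: add_divide_distrib p_integral_add)

lemma p_adic_dvd_mult:
  assumes "p_adic_dvd p k u" and "p_adic_dvd p l v"
  shows "p_adic_dvd p (k + l) (u * v)"
proof -
  obtain r s where "p_integral p r" "u = of_nat p ^ k * r" "p_integral p s" "v = of_nat p ^ l * s"
    using assms unfolding p_adic_dvd_iff by blast
  then show ?thesis
    unfolding p_adic_dvd_iff by (intro exI[of _ "r * s"]) (simp add: p_integral_mult power_add mult_ac)
qed

lemma p_adic_dvd_mult_p_integral:
  assumes "p_adic_dvd p k u" and "p_integral p v"
  shows "p_adic_dvd p k (u * v)"
proof -
  have "u * v / of_nat (p ^ k) = u / of_nat (p ^ k) * v"
    by simp
  with assms show ?thesis
    unfolding p_adic_dvd_def by (metis p_integral_mult)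
qed

lemma p_adic_dvd_p: "p_adic_dvd p 1 (of_nat p)"
  unfolding p_adic_dvd_iff by (auto intro: exI[of _ 1])

lemma p_integral_inverse:
  assumes "p_integral p a" and "\<not> p_adic_dvd p 1 a"
  shows "p_integral p (1 / a)"
proof -
  obtain m b where b: "\<not> int p dvd b" and a: "a = of_int m / of_int b"
    using assms(1) unfolding p_integral_iff[OF prime] by blast
  have "\<not> int p dvd m"
  proof
    assume "int p dvd m"
    then obtain m' where "m = int p * m'" ..
    then have "a = of_nat p ^ 1 * (of_int m' / of_int b)"
      using a by simp
    moreover have "p_integral p (of_int m' / of_int b)"
      using b unfolding p_integral_iff[OF prime] by blast
    ultimately show False
      using assms(2) unfolding p_adic_dvd_iff by blast
  qed
  moreover have "1 / a = of_int b / of_int m"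
    using a by simp
  ultimately show ?thesis
    unfolding p_integral_iff[OF prime] by blast
qed

lemma p_integral_residue:
  assumes "p_integral p a"
  obtains n where "n < p" and "p_adic_dvd p 1 (a - of_nat n)"
proof -
  obtain m b where b: "\<not> int p dvd b" and a: "a = of_int m / of_int b"
    using assms unfolding p_integral_iff[OF prime] by blast
  have "prime (int p)"
    using prime by simp
  then have "gcd b (int p) = 1"
    using b prime_imp_coprime[of "int p" b] by (simp add: coprime_commute)
  then obtain u v where uv: "u * b + v * int p = 1"
    using bezout_int[of b "int p"] by auto
  define n where "n = nat ((m * u) mod int p)"
  have n: "n < p" "int n = (m * u) mod int p"
    using prime_gt_0_nat[OF prime] unfolding n_def by (auto simp: nat_less_iff)
  define w where "w = m * v + (m * u) div int p * b"
  have "m - int n * b = m * (u * b + v * int p) - int n * b"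
    using uv by simp
  also have "\<dots> = int p * w"
    unfolding w_def n(2) by (simp add: minus_div_mult_eq_mod[symmetric] algebra_simps)
  finally have "rat_of_int (m - int n * b) = rat_of_int (int p * w)"
    by (rule arg_cong)
  then have "of_int m - of_nat n * of_int b = (of_nat p * of_int w :: rat)"
    by simp
  moreover have "b \<noteq> 0"
    using b by auto
  ultimately have "a - of_nat n = of_nat p ^ 1 * (of_int w / of_int b)"
    unfolding a by (simp add: field_simps)
  moreover have "p_integral p (of_int w / of_int b)"
    using b unfolding p_integral_iff[OF prime] by blast
  ultimately have "p_adic_dvd p 1 (a - of_nat n)"
    unfolding p_adic_dvd_iff by blast
  with n(1) show ?thesis
    by (rule that)
qed

lemma p_integral_poly_const: "p_integral p c \<Longrightarrow> p_integral_poly p [:c:]"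
  unfolding p_integral_poly_def by (simp add: coeff_pCons split: nat.split)

lemma p_integral_poly_1: "p_integral_poly p 1"
  using p_integral_poly_const[of 1] by (simp add: one_pCons)

lemma p_integral_poly_X: "p_integral_poly p [:0, 1:]"
  using p_integral_poly_const[of 1] by (simp add: p_integral_poly_pCons_iff)

lemma p_integral_poly_add: "p_integral_poly p d \<Longrightarrow> p_integral_poly p e \<Longrightarrow> p_integral_poly p (d + e)"
  unfolding p_integral_poly_def by (simp add: p_integral_add)

lemma p_integral_poly_uminus: "p_integral_poly p d \<Longrightarrow> p_integral_poly p (- d)"
  unfolding p_integral_poly_def by (simp add: p_integral_uminus)

lemma p_integral_poly_mult: "p_integral_poly p d \<Longrightarrow> p_integral_poly p e \<Longrightarrow> p_integral_poly p (d * e)"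
  unfolding p_integral_poly_def coeff_mult by (auto intro!: p_integral_sum p_integral_mult)

lemma p_integral_poly_power: "p_integral_poly p d \<Longrightarrow> p_integral_poly p (d ^ k)"
  by (induction k) (simp_all add: p_integral_poly_1 p_integral_poly_mult)

lemma p_integral_poly_eval: "p_integral_poly p d \<Longrightarrow> p_integral p w \<Longrightarrow> p_integral p (poly d w)"
  by (induction d) (auto simp: p_integral_poly_pCons_iff intro!: p_integral_add p_integral_mult)

lemma p_integral_poly_synthetic_div:
  "p_integral_poly p d \<Longrightarrow> p_integral p c \<Longrightarrow> p_integral_poly p (synthetic_div d c)"
  by (induction d) (auto simp: p_integral_poly_pCons_iff p_integral_poly_eval)

lemma p_adic_dvd_poly_if_root:
  assumes "p_integral_poly p d" "p_integral p w" "p_integral p z"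
    and "poly d z = 0" and "p_adic_dvd p 1 (w - z)"
  shows "p_adic_dvd p 1 (poly d w)"
  using poly_diff_eq_mult_synthetic_div[of d w z] assms
  by (simp add: p_adic_dvd_mult_p_integral p_integral_poly_eval p_integral_poly_synthetic_div)

lemma p_adic_dvd_square_poly_two_roots:
  assumes d: "p_integral_poly p d" and x: "p_integral p x" and "p_integral p x1" "p_integral p x2"
    and "poly d x1 = 0" "poly d x2 = 0"
    and x1: "p_adic_dvd p 1 (x - x1)" and x2: "p_adic_dvd p 1 (x - x2)"
    and equal_roots: "x1 = x2 \<Longrightarrow> p_adic_dvd p 2 (x - x1)"
  shows "p_adic_dvd p 2 (poly d x)"
proof -
  define q where "q = synthetic_div d x1"
  have q: "p_integral_poly p q"
    unfolding q_def using d \<open>p_integral p x1\<close> by (rule p_integral_poly_synthetic_div)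
  have factor: "poly d y = (y - x1) * poly q y" for y
    using poly_diff_eq_mult_synthetic_div[of d y x1] \<open>poly d x1 = 0\<close> unfolding q_def by simp
  show ?thesis
  proof (cases "x1 = x2")
    case True
    then show ?thesis
      unfolding factor using equal_roots q x by (simp add: p_adic_dvd_mult_p_integral p_integral_poly_eval)
  next
    case False
    then have "poly q x2 = 0"
      using factor[of x2] \<open>poly d x2 = 0\<close> by simp
    then have "p_adic_dvd p 1 (poly q x)"
      using p_adic_dvd_poly_if_root[OF q x \<open>p_integral p x2\<close> _ x2] by blast
    with x1 have "p_adic_dvd p (1 + 1) (poly d x)"
      unfolding factor by (rule p_adic_dvd_mult)
    then show ?thesis
      unfolding one_add_one .
  qed
qed

lemma p_adic_dvd_square_poly_at_pronic:
  assumes d: "p_integral_poly p d" and a: "p_integral p a" and "n < p"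
    and an: "p_adic_dvd p 1 (a - of_nat n)"
    and "poly d (of_nat (n * (n + 1))) = 0"
    and "poly d (of_nat ((p - 1 - n) * (p - n))) = 0"
  shows "p_adic_dvd p 2 (poly d (a * (a + 1)))"
proof (rule p_adic_dvd_square_poly_two_roots[OF d _ p_integral_of_nat p_integral_of_nat assms(5,6)])
  have an': "p_adic_dvd p 1 (a - of_nat n + of_nat p)"
    using an p_adic_dvd_p by (rule p_adic_dvd_add)
  have x_x1: "a * (a + 1) - of_nat (n * (n + 1)) = (a - of_nat n) * (a + of_nat n + 1)"
    by (simp add: algebra_simps)
  have "(of_nat ((p - 1 - n) * (p - n)) :: rat) = (of_nat p - 1 - of_nat n) * (of_nat p - of_nat n)"
    unfolding of_nat_mult using \<open>n < p\<close> by (simp add: of_nat_diff)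
  then have x_x2: "a * (a + 1) - of_nat ((p - 1 - n) * (p - n))
      = (a - of_nat n + of_nat p) * (a + of_nat n + 1 - of_nat p)"
    by (simp add: algebra_simps)
  show "p_integral p (a * (a + 1))"
    using a by (simp add: p_integral_add p_integral_mult)
  show "p_adic_dvd p 1 (a * (a + 1) - of_nat (n * (n + 1)))"
    unfolding x_x1 using an a by (simp add: p_adic_dvd_mult_p_integral p_integral_add)
  show "p_adic_dvd p 1 (a * (a + 1) - of_nat ((p - 1 - n) * (p - n)))"
    unfolding x_x2 using an' a by (simp add: p_adic_dvd_mult_p_integral p_integral_add p_integral_diff)
  assume "(of_nat (n * (n + 1)) :: rat) = of_nat ((p - 1 - n) * (p - n))"
  then have "p = 2 * n + 1"
    using \<open>n < p\<close> pronic_eq_reflection_imp unfolding of_nat_eq_iff by metis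
  then have "a + of_nat n + 1 = a - of_nat n + of_nat p"
    by simp
  then have "p_adic_dvd p (1 + 1) (a * (a + 1) - of_nat (n * (n + 1)))"
    unfolding x_x1 using an an' by (metis p_adic_dvd_mult)
  then show "p_adic_dvd p 2 (a * (a + 1) - of_nat (n * (n + 1)))"
    unfolding one_add_one .
qed

lemma p_integral_polyfun_const: "p_integral p c \<Longrightarrow> p_integral_polyfun p (\<lambda>y. c)"
  unfolding p_integral_polyfun_def using p_integral_poly_const by (intro exI[of _ "[:c:]"]) auto

lemma p_integral_polyfun_id: "p_integral_polyfun p (\<lambda>y. y)"
  unfolding p_integral_polyfun_def using p_integral_poly_X by (intro exI[of _ "[:0, 1:]"]) auto

lemma p_integral_polyfun_add:
  "p_integral_polyfun p f \<Longrightarrow> p_integral_polyfun p g \<Longrightarrow> p_integral_polyfun p (\<lambda>y. f y + g y)"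
  unfolding p_integral_polyfun_def by (metis p_integral_poly_add poly_add)

lemma p_integral_polyfun_mult:
  "p_integral_polyfun p f \<Longrightarrow> p_integral_polyfun p g \<Longrightarrow> p_integral_polyfun p (\<lambda>y. f y * g y)"
  unfolding p_integral_polyfun_def by (metis p_integral_poly_mult poly_mult)

lemma p_integral_polyfun_divide_of_nat:
  "p_integral_polyfun p f \<Longrightarrow> \<not> p dvd m \<Longrightarrow> p_integral_polyfun p (\<lambda>y. f y / of_nat m)"
  using p_integral_polyfun_mult[of f "\<lambda>y. 1 / of_nat m"]
  by (simp add: p_integral_polyfun_const p_integral_divide_of_nat)

lemma p_integral_polyfun_diff:
  "p_integral_polyfun p f \<Longrightarrow> p_integral_polyfun p g \<Longrightarrow> p_integral_polyfun p (\<lambda>y. f y - g y)"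
  unfolding p_integral_polyfun_def by (metis p_integral_poly_add p_integral_poly_uminus poly_diff diff_conv_add_uminus)

lemma p_integral_polyfun_sum:
  "(\<And>i. i \<in> A \<Longrightarrow> p_integral_polyfun p (f i)) \<Longrightarrow> p_integral_polyfun p (\<lambda>y. \<Sum>i\<in>A. f i y)"
  by (induction A rule: infinite_finite_induct)
    (simp_all add: p_integral_polyfun_const p_integral_polyfun_add)

lemma p_integral_polyfun_prod:
  "(\<And>i. i \<in> A \<Longrightarrow> p_integral_polyfun p (f i)) \<Longrightarrow> p_integral_polyfun p (\<lambda>y. \<Prod>i\<in>A. f i y)"
  by (induction A rule: infinite_finite_induct)
    (simp_all add: p_integral_polyfun_const p_integral_polyfun_mult)

lemma p_integral_polyfun_coeffs_const:
  "p_integral_poly p P \<Longrightarrow> p_integral_polyfun_coeffs p (\<lambda>y. P)"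
  unfolding p_integral_polyfun_coeffs_def p_integral_poly_def by (simp add: p_integral_polyfun_const)

lemma p_integral_polyfun_coeffs_smult:
  "p_integral_polyfun p f \<Longrightarrow> p_integral_poly p P \<Longrightarrow> p_integral_polyfun_coeffs p (\<lambda>y. smult (f y) P)"
  unfolding p_integral_polyfun_coeffs_def p_integral_poly_def
  by (simp add: p_integral_polyfun_mult p_integral_polyfun_const)

lemma p_integral_polyfun_coeffs_const_mult:
  "p_integral_polyfun p f \<Longrightarrow> p_integral_polyfun_coeffs p F \<Longrightarrow> p_integral_polyfun_coeffs p (\<lambda>y. [:f y:] * F y)"
  unfolding p_integral_polyfun_coeffs_def by (simp add: p_integral_polyfun_mult)

lemma p_integral_polyfun_coeffs_add:
  "p_integral_polyfun_coeffs p F \<Longrightarrow> p_integral_polyfun_coeffs p G \<Longrightarrow> p_integral_polyfun_coeffs p (\<lambda>y. F y + G y)"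
  unfolding p_integral_polyfun_coeffs_def by (simp add: p_integral_polyfun_add)

lemma p_integral_polyfun_coeffs_diff:
  "p_integral_polyfun_coeffs p F \<Longrightarrow> p_integral_polyfun_coeffs p G \<Longrightarrow> p_integral_polyfun_coeffs p (\<lambda>y. F y - G y)"
  unfolding p_integral_polyfun_coeffs_def by (simp add: p_integral_polyfun_diff)

lemma p_integral_polyfun_coeffs_mult:
  "p_integral_polyfun_coeffs p F \<Longrightarrow> p_integral_polyfun_coeffs p G \<Longrightarrow> p_integral_polyfun_coeffs p (\<lambda>y. F y * G y)"
  unfolding p_integral_polyfun_coeffs_def coeff_mult
  by (intro allI p_integral_polyfun_sum p_integral_polyfun_mult) auto

lemma p_integral_polyfun_coeffs_power:
  "p_integral_polyfun_coeffs p F \<Longrightarrow> p_integral_polyfun_coeffs p (\<lambda>y. F y ^ k)"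
  by (induction k)
    (simp_all add: p_integral_polyfun_coeffs_const p_integral_poly_1 p_integral_polyfun_coeffs_mult)

lemma p_integral_polyfun_coeffs_pderiv:
  "p_integral_polyfun_coeffs p F \<Longrightarrow> p_integral_polyfun_coeffs p (\<lambda>y. pderiv (F y))"
  unfolding p_integral_polyfun_coeffs_def coeff_pderiv
  using p_integral_polyfun_mult[OF p_integral_polyfun_const[OF p_integral_of_nat]] by blast

lemma p_integral_polyfun_coeffs_sum:
  "(\<And>i. i \<in> A \<Longrightarrow> p_integral_polyfun_coeffs p (F i))
    \<Longrightarrow> p_integral_polyfun_coeffs p (\<lambda>y. \<Sum>i\<in>A. F i y)"
  unfolding p_integral_polyfun_coeffs_def coeff_sum by (intro allI p_integral_polyfun_sum) auto

section \<open>The congruence\<close>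

lemma p_integral_polyfun_binom_pair: "k < p \<Longrightarrow> p_integral_polyfun p (binom_pair k)"
proof -
  assume "k < p"
  have "p_integral_polyfun p (\<lambda>y. \<Prod>j<k. (of_nat (j * (j + 1)) - y) / of_nat ((j + 1)^2))"
  proof (rule p_integral_polyfun_prod)
    fix j
    assume "j \<in> {..<k}"
    then have "\<not> p dvd j + 1"
      using \<open>k < p\<close> nat_dvd_not_less by simp
    then have "\<not> p dvd (j + 1)^2"
      using prime prime_dvd_power by blast
    moreover have "p_integral_polyfun p (\<lambda>y. of_nat (j * (j + 1)) - y)"
      by (intro p_integral_polyfun_diff p_integral_polyfun_const p_integral_polyfun_id p_integral_of_nat)
    ultimately show "p_integral_polyfun p (\<lambda>y. (of_nat (j * (j + 1)) - y) / of_nat ((j + 1)^2))"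
      using p_integral_polyfun_divide_of_nat by blast
  qed
  then show ?thesis
    unfolding binom_pair_def[abs_def] .
qed

lemma p_integral_polyfun_coeffs_legendre_defect: "p_integral_polyfun_coeffs p (legendre_defect p)"
proof -
  have pronic: "p_integral_poly p pronic"
    by (intro p_integral_poly_mult p_integral_poly_add p_integral_poly_X p_integral_poly_1)
  have "p_integral_polyfun_coeffs p (\<lambda>y. pcompose (catalan_sum (p - 2) y) pronic)"
    unfolding pcompose_catalan_sum
  proof (rule p_integral_polyfun_coeffs_sum)
    fix k
    assume "k \<in> {0..p - 2}"
    then have "k + 1 < p"
      using prime_ge_2_nat[OF prime] by auto
    then have "k < p" "\<not> p dvd k + 1"
      using nat_dvd_not_less by auto
    then show "p_integral_polyfun_coeffs p
        (\<lambda>y. smult (binom_pair k y * of_nat ((2 * k) choose k) / of_nat (k + 1)) ((- pronic) ^ k))"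
      by (intro p_integral_polyfun_coeffs_smult p_integral_polyfun_divide_of_nat p_integral_polyfun_mult
          p_integral_polyfun_binom_pair p_integral_polyfun_const p_integral_of_nat p_integral_poly_power
          p_integral_poly_uminus pronic)
  qed
  moreover have "p_integral_polyfun_coeffs p (legendre_sum (p - 1))"
    unfolding legendre_sum_def[abs_def]
    using prime_gt_0_nat[OF prime]
    by (intro p_integral_polyfun_coeffs_sum p_integral_polyfun_coeffs_smult p_integral_polyfun_binom_pair
        p_integral_poly_power p_integral_poly_uminus p_integral_poly_X) auto
  ultimately show ?thesis
    unfolding legendre_defect_def[abs_def]
    by (intro p_integral_polyfun_coeffs_add p_integral_polyfun_coeffs_diff p_integral_polyfun_coeffs_const_mult
        p_integral_polyfun_id p_integral_polyfun_coeffs_mult p_integral_polyfun_coeffs_const pronic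
        p_integral_polyfun_coeffs_power p_integral_polyfun_coeffs_pderiv)
qed

lemma p_integral_inverse_pronic:
  assumes "p_integral p a" and "\<not> p_adic_dvd p 1 a" and "\<not> p_adic_dvd p 1 (a + 1)"
  shows "p_integral p (1 / (a * (a + 1)))"
proof -
  have "p_integral p (1 / a)" "p_integral p (1 / (a + 1))"
    using assms by (simp_all add: p_integral_inverse p_integral_add)
  then show ?thesis
    using p_integral_mult by fastforce
qed

lemma p_adic_dvd_coeff_legendre_defect:
  assumes a: "p_integral p a" and a0: "\<not> p_adic_dvd p 1 a" and a1: "\<not> p_adic_dvd p 1 (a + 1)"
  shows "p_adic_dvd p 2 (coeff (legendre_defect p (a * (a + 1))) m)"
proof -
  obtain n where "n < p" and an: "p_adic_dvd p 1 (a - of_nat n)"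
    using p_integral_residue[OF a] .
  have "n \<noteq> 0"
  proof
    assume "n = 0"
    with an a0 show False by simp
  qed
  have "n \<noteq> p - 1"
  proof
    assume "n = p - 1"
    then have "a - of_nat n + of_nat p = a + 1"
      using prime_ge_1_nat[OF prime] by (simp add: of_nat_diff)
    moreover have "p_adic_dvd p 1 (a - of_nat n + of_nat p)"
      using an p_adic_dvd_p by (rule p_adic_dvd_add)
    ultimately show False
      using a1 by metis
  qed
  then have n: "n + 2 \<le> p" and n': "(p - 1 - n) + 2 \<le> p"
    using \<open>n < p\<close> \<open>n \<noteq> 0\<close> by auto
  obtain d where d: "p_integral_poly p d" and coeff_d: "\<And>y. coeff (legendre_defect p y) m = poly d y"
    using p_integral_polyfun_coeffs_legendre_defect
    unfolding p_integral_polyfun_coeffs_def p_integral_polyfun_def by blast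
  have root1: "poly d (of_nat (n * (n + 1))) = 0"
    using coeff_d legendre_defect_at_pronic[OF n] by (metis coeff_0)
  have "(p - 1 - n) * (p - 1 - n + 1) = (p - 1 - n) * (p - n)"
    using \<open>n < p\<close> by (simp add: Suc_diff_Suc)
  then have root2: "poly d (of_nat ((p - 1 - n) * (p - n))) = 0"
    using coeff_d legendre_defect_at_pronic[OF n'] by (metis coeff_0)
  show ?thesis
    using p_adic_dvd_square_poly_at_pronic[OF d a \<open>n < p\<close> an root1 root2] coeff_d by simp
qed

end

theorem theorem2p1:
  fixes p :: nat and a :: rat
  assumes "prime p" and "odd p"
    and "p_integral p a"
    and "\<not> cong_pp p 1 a 0" and "\<not> cong_pp p 1 a (-1)"
  shows "poly_cong_pp p 2
     (\<Sum>k=0..p-2. smult ((a gchoose k) * ((-1-a) gchoose k) * of_nat ((2*k) choose k) / of_nat (k+1))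
                       ((- ([:0,1:] * ([:0,1:] + 1))) ^ k))
     ((\<Sum>k=0..p-1. smult ((a gchoose k) * ((-1-a) gchoose k)) ((- [:0,1:]) ^ k)) ^ 2
      - smult (1 / (a * (a + 1)))
          (([:0,1:] + 1) *
           (((\<Sum>k=0..p-1. smult ((a gchoose k) * ((-1-a) gchoose k) * of_nat k) ((- [:0,1:]) ^ k)) ^ 2)
             div [:0,1:])))"
proof -
  define x where "x = a * (a + 1)"
  have a0: "\<not> p_adic_dvd p 1 a" and a1: "\<not> p_adic_dvd p 1 (a + 1)"
    using assms(4,5) unfolding cong_pp_iff_p_adic_dvd by simp_all
  then have "x \<noteq> 0"
    unfolding x_def p_adic_dvd_def using p_integral_0[OF assms(1)] by auto
  have "p_adic_dvd p 2 (1 / x * coeff (legendre_defect p x) m)" for m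
    unfolding x_def
    by (subst mult.commute, rule p_adic_dvd_mult_p_integral[OF assms(1)])
      (use p_adic_dvd_coeff_legendre_defect[OF assms(1,3) a0 a1]
        p_integral_inverse_pronic[OF assms(1,3) a0 a1] in auto)
  then show ?thesis
    unfolding gbinomial_mult_gbinomial_neg legendre_sum_derivative x_def[symmetric] X_mult_square_div_X
      pcompose_catalan_sum[symmetric] legendre_sum_def[symmetric] poly_cong_pp_def cong_pp_iff_p_adic_dvd
      coeff_diff[symmetric] smult_legendre_defect[OF \<open>x \<noteq> 0\<close>, symmetric] coeff_smult
    by blast
qed

end
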